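(* Let $s,t\in(0,\pi)$ with $s\ne t$, so that $P=(\cos t,\sin t)$ and $Q=(\cos s,\sin s)$ are two distinct points of the unit circle in the half-plane $y>0$. Consider $$f(u)=\frac{1}{\sqrt{\sin(t+u)}}+\frac{1}{\sqrt{\sin(s+u)}},$$ defined for all $u$ with $\sin(t+u)>0$ and $\sin(s+u)>0$. Then on the interval of definition $I=(-\min(s,t),\ \pi-\max(s,t))$ (which contains $0$), $f$ attains its minimum at $u_{\min}=\frac{\pi}{2}-\frac{s+t}{2}$ (the rotation by angle $u_{\min}$ takes $P,Q$ to points forming a segment parallel to the $x$-axis); $u_{\min}$ is the only critical point of $f$ on $I$, and $f$ is decreasing as $u$ increases in $I$ while $u<u_{\min}$. *)

theory Defs
  imports Complex_Main
begin

end

theory Submission imports Defs begin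

text \<open>
  Write \<open>G y = cos y / sin y ^ (3/2)\<close>, so that \<open>-G y / 2\<close> is the derivative of
  \<open>1 / sqrt (sin y)\<close> and \<open>f' u = -(G (t + u) + G (s + u)) / 2\<close>. On \<open>(0, pi)\<close> the function
  \<open>G\<close> is strictly decreasing and odd about \<open>pi / 2\<close>, i.e. \<open>G (pi - y) = - G y\<close>. Hence
  \<open>G a + G b = G a - G (pi - b)\<close> has the sign of \<open>pi - a - b\<close>, and \<open>f' u\<close> has the sign
  of \<open>(t + u) + (s + u) - pi = 2 (u - umin)\<close>: \<open>f\<close> falls strictly up to \<open>umin\<close> and rises
  after it.
\<close>

definition G :: "real \<Rightarrow> real" where
  "G y = cos y / (sin y * sqrt (sin y))"

lemma G_pi_minus: "G (pi - y) = - G y"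
  unfolding G_def by simp

lemma G_strict_antimono_first_half:
  assumes "0 < x" "x < y" "y \<le> pi / 2"
  shows "G y < G x"
proof -
  have sin_x: "0 < sin x" using assms by (intro sin_gt_zero) auto
  have "sin x < sin y" using assms by (intro sin_monotone_2pi) auto
  then have denom: "sin x * sqrt (sin x) < sin y * sqrt (sin y)"
    using sin_x by (intro mult_strict_mono) auto
  have denom_pos: "0 < sin x * sqrt (sin x)" using sin_x by simp
  have "cos y < cos x" using assms by (intro cos_monotone_0_pi) auto
  have "0 \<le> cos y" using assms by (intro cos_ge_zero) auto
  have "cos y / (sin y * sqrt (sin y)) \<le> cos y / (sin x * sqrt (sin x))"
    using \<open>0 \<le> cos y\<close> denom denom_pos by (intro divide_left_mono) auto
  also have "\<dots> < cos x / (sin x * sqrt (sin x))"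
    using \<open>cos y < cos x\<close> denom_pos by (intro divide_strict_right_mono) auto
  finally show ?thesis unfolding G_def .
qed

lemma G_strict_antimono:
  assumes "0 < x" "x < y" "y < pi"
  shows "G y < G x"
proof -
  consider "y \<le> pi / 2" | "pi / 2 \<le> x" | "x < pi / 2" "pi / 2 < y" by linarith
  then show ?thesis
  proof cases
    case 1
    then show ?thesis using G_strict_antimono_first_half assms by blast
  next
    case 2
    have "G (pi - x) < G (pi - y)" using assms 2 by (intro G_strict_antimono_first_half) auto
    then show ?thesis by (simp add: G_pi_minus)
  next
    case 3
    have "0 < sin y" using assms by (intro sin_gt_zero) auto
    have "0 < cos (pi - y)" using 3 assms by (intro cos_gt_zero) auto
    then have "G y < 0" using \<open>0 < sin y\<close> unfolding G_def by (simp add: divide_neg_pos)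
    have "0 < sin x" "0 < cos x" using 3 assms by (auto intro: sin_gt_zero cos_gt_zero)
    then have "0 < G x" unfolding G_def by simp
    with \<open>G y < 0\<close> show ?thesis by simp
  qed
qed

lemma sgn_G_add:
  assumes "0 < a" "a < pi" "0 < b" "b < pi"
  shows "sgn (G a + G b) = sgn (pi - a - b)"
proof -
  have "G a + G b = G a - G (pi - b)" by (simp add: G_pi_minus)
  moreover have "G (pi - b) < G a" if "a < pi - b"
    using that assms by (intro G_strict_antimono) auto
  moreover have "G a < G (pi - b)" if "pi - b < a"
    using that assms by (intro G_strict_antimono) auto
  ultimately show ?thesis
    by (cases a "pi - b" rule: linorder_cases) (auto simp: sgn_if)
qed

lemma has_real_derivative_inverse_sqrt_sin:
  assumes "0 < sin (c + x)"
  shows "((\<lambda>u. 1 / sqrt (sin (c + u))) has_real_derivative - G (c + x) / 2) (at x)"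
proof -
  have "((\<lambda>u. sqrt (sin (c + u))) has_real_derivative
      inverse (sqrt (sin (c + x))) / 2 * cos (c + x)) (at x)"
    using assms by (intro DERIV_chain2[where f = sqrt] DERIV_real_sqrt derivative_eq_intros) auto
  from DERIV_inverse_fun[OF this] assms
  have "((\<lambda>u. 1 / sqrt (sin (c + u))) has_real_derivative
      - (inverse (sqrt (sin (c + x))) / 2 * cos (c + x)) / (sqrt (sin (c + x)))\<^sup>2) (at x)"
    unfolding divide_inverse by (simp add: power2_eq_square)
  moreover have "- (inverse (sqrt (sin (c + x))) / 2 * cos (c + x)) / (sqrt (sin (c + x)))\<^sup>2
      = - G (c + x) / 2"
    using assms unfolding G_def by (simp add: field_simps)
  ultimately show ?thesis by metis
qed

lemma min_at_derivative_sign_change: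
  fixes f f' :: "real \<Rightarrow> real"
  assumes "m \<in> {a<..<b}" "u \<in> {a<..<b}"
    and deriv: "\<And>x. x \<in> {a<..<b} \<Longrightarrow> (f has_real_derivative f' x) (at x)"
    and sign: "\<And>x. x \<in> {a<..<b} \<Longrightarrow> sgn (f' x) = sgn (x - m)"
  shows "f m \<le> f u"
proof (cases "u \<le> m")
  case True
  show ?thesis
  proof (rule DERIV_nonpos_imp_nonincreasing[OF True])
    fix x assume "u \<le> x" "x \<le> m"
    then have "x \<in> {a<..<b}" using assms(1,2) by auto
    moreover from this have "f' x \<le> 0"
      using sign[of x] \<open>x \<le> m\<close> by (auto simp: sgn_if split: if_splits)
    ultimately show "\<exists>y. DERIV f x :> y \<and> y \<le> 0" using deriv by blast
  qed
next
  case False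
  show ?thesis
  proof (rule DERIV_nonneg_imp_nondecreasing[of m u])
    show "m \<le> u" using False by simp
  next
    fix x assume "m \<le> x" "x \<le> u"
    then have "x \<in> {a<..<b}" using assms(1,2) by auto
    moreover from this have "0 \<le> f' x"
      using sign[of x] \<open>m \<le> x\<close> by (auto simp: sgn_if split: if_splits)
    ultimately show "\<exists>y. DERIV f x :> y \<and> 0 \<le> y" using deriv by blast
  qed
qed

lemma strict_antimono_before_derivative_sign_change:
  fixes f f' :: "real \<Rightarrow> real"
  assumes "m \<in> {a<..<b}" "x \<in> {a<..<b}" "x < y" "y < m"
    and deriv: "\<And>z. z \<in> {a<..<b} \<Longrightarrow> (f has_real_derivative f' z) (at z)"
    and sign: "\<And>z. z \<in> {a<..<b} \<Longrightarrow> sgn (f' z) = sgn (z - m)"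
  shows "f y < f x"
proof (rule DERIV_neg_imp_decreasing[OF \<open>x < y\<close>])
  fix z assume "x \<le> z" "z \<le> y"
  then have "z \<in> {a<..<b}" "z < m" using assms(1-4) by auto
  then have "f' z < 0" using sign[of z] by (simp add: sgn_if split: if_splits)
  then show "\<exists>d. DERIV f z :> d \<and> d < 0" using deriv \<open>z \<in> {a<..<b}\<close> by blast
qed

theorem lemma1:
  fixes s t :: real and f :: "real \<Rightarrow> real"
  assumes "0 < s" "s < pi" "0 < t" "t < pi" "s \<noteq> t"
    and f_def: "\<And>u. f u = 1 / sqrt (sin (t + u)) + 1 / sqrt (sin (s + u))"
  defines "I \<equiv> {- min s t <..< pi - max s t}"
    and "umin \<equiv> pi / 2 - (s + t) / 2"
  shows "0 \<in> I
    \<and> (\<forall>u\<in>I. sin (t + u) > 0 \<and> sin (s + u) > 0)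
    \<and> umin \<in> I
    \<and> sin (t + umin) = sin (s + umin)
    \<and> (\<forall>u\<in>I. f umin \<le> f u)
    \<and> (\<forall>u\<in>I. f differentiable (at u))
    \<and> (\<forall>u\<in>I. (f has_real_derivative 0) (at u) \<longleftrightarrow> u = umin)
    \<and> (\<forall>x\<in>I. \<forall>y\<in>I. x < y \<and> y < umin \<longrightarrow> f y < f x)"
proof -
  define f' where "f' u = - G (t + u) / 2 + - G (s + u) / 2" for u
  have mem_I: "u \<in> I \<longleftrightarrow> 0 < t + u \<and> t + u < pi \<and> 0 < s + u \<and> s + u < pi" for u
    unfolding I_def by auto
  have "0 \<in> I" "umin \<in> I" using assms(1-4) unfolding mem_I umin_def by (auto simp: field_simps)
  have sin_pos: "sin (t + u) > 0 \<and> sin (s + u) > 0" if "u \<in> I" for u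
    using that mem_I by (auto intro!: sin_gt_zero)
  have "t + umin = pi - (s + umin)" unfolding umin_def by (simp add: field_simps)
  then have "sin (t + umin) = sin (s + umin)" by (metis sin_pi_minus)
  have deriv: "(f has_real_derivative f' u) (at u)" if "u \<in> I" for u
    unfolding f_def[abs_def] f'_def using sin_pos[OF that]
    by (intro DERIV_add has_real_derivative_inverse_sqrt_sin) auto
  have sign: "sgn (f' u) = sgn (u - umin)" if "u \<in> I" for u
  proof -
    have "sgn (f' u) = - sgn (G (t + u) + G (s + u)) " unfolding f'_def by (auto simp: sgn_if)
    also have "\<dots> = sgn (u - umin)"
      using that by (simp add: mem_I sgn_G_add umin_def sgn_minus[symmetric] field_simps)
    finally show ?thesis .
  qed
  note on_interval = deriv[unfolded I_def] sign[unfolded I_def]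
  have "\<forall>u\<in>I. f umin \<le> f u"
    using min_at_derivative_sign_change[OF _ _ on_interval] \<open>umin \<in> I\<close>
    unfolding I_def by blast
  moreover have "\<forall>u\<in>I. f differentiable (at u)"
    using deriv real_differentiable_def by blast
  moreover have "\<forall>u\<in>I. (f has_real_derivative 0) (at u) \<longleftrightarrow> u = umin"
    using deriv sign DERIV_unique by (metis sgn_0_0 right_minus_eq)
  moreover have "\<forall>x\<in>I. \<forall>y\<in>I. x < y \<and> y < umin \<longrightarrow> f y < f x"
    using strict_antimono_before_derivative_sign_change[OF _ _ _ _ on_interval] \<open>umin \<in> I\<close>
    unfolding I_def by blast
  ultimately show ?thesis
    using \<open>0 \<in> I\<close> sin_pos \<open>umin \<in> I\<close> \<open>sin (t + umin) = sin (s + umin)\<close> by blast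
qed

end
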